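(* Let $c\in\operatorname{int}\Delta$ and let $\underline M$ be as defined below. Let $M>\underline M$ and let $x^M$ be a mutation equilibrium for $M$ (with respect to $c$). Then there is a unique function $\mathcal M:(\underline M,\infty)\to\Delta$ with $\mathcal M(M)=x^M$ such that $\mathcal M(m)$ is a mutation equilibrium for $m$ for every $m\in(\underline M,\infty)$ (unique among continuous such functions). Moreover $\mathcal M$ is continuously differentiable and $\mathcal M(m)\to c$ as $m\to\infty$.
   Context: Let $I=\{1,\dots,N\}$ be a finite set of populations; population $i$ has the finite type set $S_i=\{1,\dots,n_i\}$. Let $S=\{(i,h): i\in I, h\in S_i\}$, $\Delta_i=\{x_i\in\mathbb R^{n_i}_{\ge 0}:\sum_{h\le n_i}x_{ih}=1\}$, $\Delta=\prod_{i\in I}\Delta_i\subset\mathbb R^S$, and $\operatorname{int}\Delta=\{x\in\Delta: x_{ih}>0 \text{ for all }(i,h)\in S\}$. For each $(i,h)\in S$ let $f_{ih}\in C^1(U,\mathbb R)$ for some open $U\supset\Delta$, with $\partial f_{ih}/\partial x_{ik}=0$ for all $i\in I$, $h,k\in S_i$. Put $\bar f_i(x)=\sum_{h\le n_i}x_{ih}f_{ih}(x)$, $\phi_{ih}(x)=x_{ih}(f_{ih}(x)-\bar f_i(x))$, and for $M\ge0$, $c\in\operatorname{int}\Delta$, $\phi^M_{ih}(x)=\phi_{ih}(x)+M(c_{ih}-x_{ih})$. A mutation equilibrium for $M$ is $x\in\Delta$ with $\phi^M(x)=0$. Reduced system: for each $i$ substitute $x_{in_i}=1-\sum_{k<n_i}x_{ik}$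 and drop the equation for $x_{in_i}$, yielding $\tilde\phi,\tilde\phi^M$ with $D\tilde\phi^M=D\tilde\phi-M\,\mathrm{Id}$. Define $\underline M=\max\bigl(0,\sup\{\operatorname{Re}\lambda:\lambda\text{ eigenvalue of }D\tilde\phi(x),x\in\Delta\}\bigr)$. *)

theory Defs
  imports "HOL-Analysis.Analysis"
begin

text \<open>Points of R^S are
  represented as vectors over a finite index type 'k together with a bijection
  e : 'k -> S; the coordinate x_{ih} is x at the preimage of (i,h).\<close>

definition Sidx :: "nat \<Rightarrow> (nat \<Rightarrow> nat) \<Rightarrow> (nat \<times> nat) set" where
  "Sidx N n = {(i,h). i \<in> {1..N} \<and> h \<in> {1..n i}}"

definition co :: "('k \<Rightarrow> nat \<times> nat) \<Rightarrow> real^'k \<Rightarrow> nat \<Rightarrow> nat \<Rightarrow> real" where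
  "co e x i h = x $ (inv e (i,h))"

definition Simplex :: "nat \<Rightarrow> (nat \<Rightarrow> nat) \<Rightarrow> ('k \<Rightarrow> nat \<times> nat) \<Rightarrow> (real^'k) set" where
  "Simplex N n e = {x. (\<forall>(i,h)\<in>Sidx N n. co e x i h \<ge> 0) \<and>
                        (\<forall>i\<in>{1..N}. (\<Sum>h=1..n i. co e x i h) = 1)}"

definition intSimplex :: "nat \<Rightarrow> (nat \<Rightarrow> nat) \<Rightarrow> ('k \<Rightarrow> nat \<times> nat) \<Rightarrow> (real^'k) set" where
  "intSimplex N n e = {x \<in> Simplex N n e. \<forall>(i,h)\<in>Sidx N n. co e x i h > 0}"

definition C1_on :: "(real^'k \<Rightarrow> real) \<Rightarrow> (real^'k) set \<Rightarrow> bool" where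
  "C1_on f U \<longleftrightarrow> (\<exists>f'. (\<forall>x\<in>U. (f has_derivative blinfun_apply (f' x)) (at x)) \<and> continuous_on U f')"

definition partial_zero :: "('k \<Rightarrow> nat \<times> nat) \<Rightarrow> (real^'k \<Rightarrow> real) \<Rightarrow> nat \<Rightarrow> nat \<Rightarrow> real^'k \<Rightarrow> bool" where
  "partial_zero e g i k x \<longleftrightarrow>
     ((\<lambda>t. g (x + t *\<^sub>R axis (inv e (i,k)) 1)) has_real_derivative 0) (at 0)"

definition fbar :: "(nat \<Rightarrow> nat) \<Rightarrow> ('k \<Rightarrow> nat \<times> nat) \<Rightarrow> (nat \<Rightarrow> nat \<Rightarrow> real^'k \<Rightarrow> real)
                     \<Rightarrow> nat \<Rightarrow> real^'k \<Rightarrow> real" where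
  "fbar n e f i x = (\<Sum>h=1..n i. co e x i h * f i h x)"

definition phi :: "(nat \<Rightarrow> nat) \<Rightarrow> ('k \<Rightarrow> nat \<times> nat) \<Rightarrow> (nat \<Rightarrow> nat \<Rightarrow> real^'k \<Rightarrow> real)
                     \<Rightarrow> nat \<Rightarrow> nat \<Rightarrow> real^'k \<Rightarrow> real" where
  "phi n e f i h x = co e x i h * (f i h x - fbar n e f i x)"

definition phiM :: "(nat \<Rightarrow> nat) \<Rightarrow> ('k \<Rightarrow> nat \<times> nat) \<Rightarrow> (nat \<Rightarrow> nat \<Rightarrow> real^'k \<Rightarrow> real)
                     \<Rightarrow> real \<Rightarrow> real^'k \<Rightarrow> nat \<Rightarrow> nat \<Rightarrow> real^'k \<Rightarrow> real" where
  "phiM n e f M c i h x = phi n e f i h x + M * (co e c i h - co e x i h)"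

definition mut_eq :: "nat \<Rightarrow> (nat \<Rightarrow> nat) \<Rightarrow> ('k \<Rightarrow> nat \<times> nat) \<Rightarrow> (nat \<Rightarrow> nat \<Rightarrow> real^'k \<Rightarrow> real)
                     \<Rightarrow> real^'k \<Rightarrow> real \<Rightarrow> real^'k \<Rightarrow> bool" where
  "mut_eq N n e f c M x \<longleftrightarrow> x \<in> Simplex N n e \<and>
     (\<forall>(i,h)\<in>Sidx N n. phiM n e f M c i h x = 0)"

text \<open>Reduced system: the coordinates (i,h) with h < n i are free; the coordinate
  (i, n i) is replaced by 1 minus the sum of the others.\<close>
definition Red :: "nat \<Rightarrow> (nat \<Rightarrow> nat) \<Rightarrow> (nat \<times> nat) set" where
  "Red N n = {(i,h). i \<in> {1..N} \<and> h \<in> {1..<n i}}"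

definition lift :: "(nat \<Rightarrow> nat) \<Rightarrow> ('k \<Rightarrow> nat \<times> nat) \<Rightarrow> real^'k \<Rightarrow> real^'k" where
  "lift n e y = (\<chi> j. if snd (e j) = n (fst (e j))
                        then 1 - (\<Sum>k=1..<n (fst (e j)). co e y (fst (e j)) k)
                        else y $ j)"

text \<open>Entry ((i,h),(j,k)) of the Jacobian D phi-tilde at x: partial derivative of
  phi-tilde_{ih} with respect to the reduced variable x_{jk}.\<close>
definition redJac :: "(nat \<Rightarrow> nat) \<Rightarrow> ('k \<Rightarrow> nat \<times> nat) \<Rightarrow> (nat \<Rightarrow> nat \<Rightarrow> real^'k \<Rightarrow> real)
                     \<Rightarrow> real^'k \<Rightarrow> nat \<times> nat \<Rightarrow> nat \<times> nat \<Rightarrow> real" where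
  "redJac n e f x ih jk =
     deriv (\<lambda>t. phi n e f (fst ih) (snd ih) (lift n e (x + t *\<^sub>R axis (inv e jk) 1))) 0"

definition is_eig :: "(nat \<times> nat) set \<Rightarrow> (nat \<times> nat \<Rightarrow> nat \<times> nat \<Rightarrow> real) \<Rightarrow> complex \<Rightarrow> bool" where
  "is_eig R A lam \<longleftrightarrow> (\<exists>v :: nat \<times> nat \<Rightarrow> complex. (\<exists>p\<in>R. v p \<noteq> 0) \<and>
      (\<forall>p\<in>R. (\<Sum>q\<in>R. complex_of_real (A p q) * v q) = lam * v p))"

text \<open>M-underline = max(0, sup of real parts of eigenvalues of D phi-tilde(x), x in Delta),
  with the sup taken in the extended reals (sup of the empty set is -infinity).\<close>
definition Mlow :: "nat \<Rightarrow> (nat \<Rightarrow> nat) \<Rightarrow> ('k \<Rightarrow> nat \<times> nat) \<Rightarrow> (nat \<Rightarrow> nat \<Rightarrow> real^'k \<Rightarrow> real) \<Rightarrow> ereal" where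
  "Mlow N n e f = max 0 (Sup {ereal (Re lam) | lam x. x \<in> Simplex N n e \<and> is_eig (Red N n) (redJac n e f x) lam})"

end

theory Submission
  imports Defs
begin

text \<open>For \<open>m > Mlow\<close>, \<open>m\<close> is not an eigenvalue of \<open>D\<phi>\<^sup>~(x)\<close> at any \<open>x \<in> \<Delta>\<close>, so the
  Jacobian \<open>D\<phi>\<^sup>~ - m Id\<close> of the reduced mutation system is invertible at every equilibrium,
  and the implicit function theorem continues each equilibrium smoothly in \<open>m\<close> and keeps it
  locally unique. Equilibria lie in the compact set \<open>\<Delta>\<close>, so an open-closed argument on the
  interval \<open>(Mlow, \<infinity>)\<close> shows that every fibre is nonempty, and that every fibre is a
  singleton because this holds for large \<open>m\<close>, where \<open>x = c + \<phi>(x)/m\<close> is a contraction.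
  The resulting curve is \<open>C\<^sup>1\<close> because its derivative solves a linear system with a
  continuous invertible matrix, and it tends to \<open>c\<close> because \<open>\<phi>(x) = m (x - c)\<close> with
  \<open>\<phi>\<close> bounded on \<open>\<Delta>\<close>.\<close>

lemma has_derivative_vec_lambda:
  fixes g :: "'n::finite \<Rightarrow> 'a::real_normed_vector \<Rightarrow> real"
  assumes "\<And>j. (g j has_derivative g' j) F"
  shows "((\<lambda>x. \<chi> j. g j x) has_derivative (\<lambda>v. \<chi> j. g' j v)) F"
proof -
  have "(\<lambda>x. \<chi> j. g j x) = (\<lambda>x. \<Sum>j\<in>UNIV. g j x *\<^sub>R axis j 1)"
    and "(\<lambda>v. \<chi> j. g' j v) = (\<lambda>v. \<Sum>j\<in>UNIV. g' j v *\<^sub>R axis j 1)"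
    by (auto simp: vec_eq_iff axis_def if_distrib cong: if_cong)
  then show ?thesis
    by (simp only:) (intro has_derivative_sum has_derivative_scaleR_left assms)
qed

lemma open_Collect_ereal_less: "open {m::real. a < ereal m}"
proof -
  have "{m::real. a < ereal m} = ereal -` {a<..}" by auto
  then show ?thesis by (simp add: open_vimage continuous_on_ereal)
qed

lemma connected_Collect_ereal_less: "connected {m::real. a < ereal m}"
  by (rule is_interval_connected) (auto simp: is_interval_1 intro: less_le_trans)

text \<open>An injective operator is bounded below, and the bound persists for nearby operators.\<close>

lemma continuous_on_linear_solution:
  fixes T :: "'a::metric_space \<Rightarrow> ('b::euclidean_space \<Rightarrow>\<^sub>L 'b)" and y w :: "'a \<Rightarrow> 'b"
  assumes T: "continuous_on S T" and inj: "\<And>s. s \<in> S \<Longrightarrow> inj (blinfun_apply (T s))"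
    and w: "continuous_on S w" and sol: "\<And>s. s \<in> S \<Longrightarrow> T s (y s) = w s"
  shows "continuous_on S y"
  unfolding continuous_on_def
proof
  fix a assume a: "a \<in> S"
  obtain B where B: "B > 0" "\<And>u. B * norm u \<le> norm (T a u)"
    using linear_inj_bounded_below_pos[OF bounded_linear.linear[OF blinfun.bounded_linear_right] inj[OF a]] by blast
  have bound: "norm (y s - y a) \<le> (2/B) * (norm (w s - w a) + norm (T s - T a) * norm (y a))"
    if s: "s \<in> S" "dist (T s) (T a) < B/2" for s
  proof -
    define u where "u = y s - y a"
    have Tsu: "T s u = (w s - w a) - (T s - T a) (y a)"
      using sol[OF s(1)] sol[OF a] by (simp add: u_def blinfun.diff_right blinfun.diff_left)
    have "B * norm u \<le> norm (T s u - (T s - T a) u)"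
      using B(2)[of u] by (simp add: blinfun.diff_left)
    also have "\<dots> \<le> norm (T s u) + norm (T s - T a) * norm u"
      using norm_triangle_ineq4 norm_blinfun[of "T s - T a" u] by (smt (verit))
    also have "\<dots> \<le> norm (T s u) + (B/2) * norm u"
      using s(2) by (intro add_left_mono mult_right_mono) (auto simp: dist_norm)
    finally have "norm u \<le> (2/B) * norm (T s u)"
      using B(1) by (simp add: field_simps)
    also have "\<dots> \<le> (2/B) * (norm (w s - w a) + norm (T s - T a) * norm (y a))"
      unfolding Tsu using B(1) norm_triangle_ineq4[of "w s - w a" "(T s - T a) (y a)"]
        norm_blinfun[of "T s - T a" "y a"]
      by (intro mult_left_mono) auto
    finally show ?thesis unfolding u_def .
  qed
  have "eventually (\<lambda>s. dist (T s) (T a) < B/2) (at a within S)"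
    using T a B(1) unfolding continuous_on_def by (metis half_gt_zero tendstoD)
  moreover have "eventually (\<lambda>s. s \<in> S) (at a within S)"
    by (simp add: eventually_at_filter)
  ultimately have "eventually (\<lambda>s. norm (y s - y a) \<le>
      (2/B) * (norm (w s - w a) + norm (T s - T a) * norm (y a))) (at a within S)"
    by eventually_elim (rule bound)
  moreover have "((\<lambda>s. (2/B) * (norm (w s - w a) + norm (T s - T a) * norm (y a))) \<longlongrightarrow> 0)
      (at a within S)"
    using T w a B(1) unfolding continuous_on_def
    by (auto intro!: tendsto_eq_intros tendsto_norm_zero LIM_zero)
  ultimately have "((\<lambda>s. y s - y a) \<longlongrightarrow> 0) (at a within S)"
    by (rule Lim_null_comparison)
  then show "(y \<longlongrightarrow> y a) (at a within S)" by (rule LIM_zero_cancel)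
qed

lemma connected_subset_eq_if_open_closed:
  fixes S T :: "'a::metric_space set"
  assumes "connected S" "T \<subseteq> S" "T \<noteq> {}"
    and open_T: "\<And>x. x \<in> T \<Longrightarrow> \<exists>\<epsilon>>0. \<forall>y\<in>S. dist y x < \<epsilon> \<longrightarrow> y \<in> T"
    and closed_T: "\<And>x. x \<in> S \<Longrightarrow> x \<in> closure T \<Longrightarrow> x \<in> T"
  shows "T = S"
proof -
  have "openin (top_of_set S) T"
    using assms(2) open_T by (auto simp: openin_euclidean_subtopology_iff)
  moreover have "closedin (top_of_set S) T"
    unfolding closedin_closed using assms(2) closed_T closure_subset
    by (intro exI[of _ "closure T"]) auto
  ultimately show ?thesis
    using assms(1,3) unfolding connected_clopen by blast
qed

text \<open>Open-closed arguments on \<open>I\<close>; compactness of \<open>Z\<close> over bounded intervals makes the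
  parameters of points of \<open>Z\<close> (outside an open set) a closed set.\<close>

lemma fibres_nonempty_if_connected:
  fixes Z :: "(real \<times> 'a::metric_space) set"
  assumes I: "connected I"
    and proper: "\<And>a b. compact (Z \<inter> {a..b} \<times> UNIV)"
    and continue: "\<And>m x. m \<in> I \<Longrightarrow> (m, x) \<in> Z \<Longrightarrow> \<exists>\<delta>>0. \<forall>m'. \<bar>m' - m\<bar> < \<delta> \<longrightarrow> (\<exists>y. (m', y) \<in> Z)"
    and start: "m0 \<in> I" "(m0, x0) \<in> Z"
  shows "\<forall>m\<in>I. \<exists>x. (m, x) \<in> Z"
proof -
  define T where "T = {m\<in>I. \<exists>x. (m, x) \<in> Z}"
  have "T = I"
  proof (rule connected_subset_eq_if_open_closed[OF I])
    show "T \<subseteq> I" "T \<noteq> {}"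
      using start by (auto simp: T_def)
  next
    fix m assume "m \<in> T"
    then obtain x where "m \<in> I" "(m, x) \<in> Z" by (auto simp: T_def)
    then obtain \<delta> where "\<delta> > 0" "\<forall>m'. \<bar>m' - m\<bar> < \<delta> \<longrightarrow> (\<exists>y. (m', y) \<in> Z)"
      using continue by blast
    then show "\<exists>\<epsilon>>0. \<forall>m'\<in>I. dist m' m < \<epsilon> \<longrightarrow> m' \<in> T"
      by (auto simp: T_def dist_real_def)
  next
    fix m assume m: "m \<in> I" "m \<in> closure T"
    define K where "K = Z \<inter> {m - 1..m + 1} \<times> UNIV"
    have "closed (fst ` K)"
      unfolding K_def using proper by (intro compact_imp_closed compact_continuous_image continuous_intros)
    moreover have "\<exists>m'\<in>fst ` K. dist m' m < \<epsilon>" if "\<epsilon> > 0" for \<epsilon>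
    proof -
      have "min \<epsilon> 1 > 0" using \<open>\<epsilon> > 0\<close> by simp
      then obtain m' where "m' \<in> T" "dist m' m < min \<epsilon> 1"
        using m(2) closure_approachable[of m T] by blast
      then obtain x where "(m', x) \<in> K" "dist m' m < \<epsilon>"
        by (auto simp: T_def K_def dist_real_def abs_less_iff)
      then show ?thesis by force
    qed
    ultimately have "m \<in> fst ` K" by (meson closed_approachable)
    then show "m \<in> T" using m(1) by (force simp: T_def K_def)
  qed
  then show ?thesis by (auto simp: T_def)
qed

lemma single_valued_fibres_near:
  fixes Z :: "(real \<times> 'a::metric_space) set"
  assumes proper: "\<And>a b. compact (Z \<inter> {a..b} \<times> UNIV)"
    and W: "open W" "\<And>x. (m, x) \<in> Z \<Longrightarrow> (m, x) \<in> W" "single_valued (Z \<inter> W)"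
  shows "\<exists>\<epsilon>>0. \<forall>m'. dist m' m < \<epsilon> \<longrightarrow> single_valued (Z \<inter> {m'} \<times> UNIV)"
proof -
  define K where "K = fst ` (Z \<inter> {m - 1..m + 1} \<times> UNIV \<inter> - W)"
  have "compact (Z \<inter> {m - 1..m + 1} \<times> UNIV \<inter> - W)"
    using W(1) by (intro compact_Int_closed[OF proper]) auto
  then have "closed K"
    unfolding K_def by (intro compact_imp_closed compact_continuous_image continuous_on_fst continuous_on_id)
  moreover have "m \<notin> K" using W(2) by (auto simp: K_def)
  ultimately have "open (- K)" "m \<in> - K" by auto
  then obtain \<epsilon> where \<epsilon>: "\<epsilon> > 0" "ball m \<epsilon> \<subseteq> - K"
    using open_contains_ball by blast
  have "single_valued (Z \<inter> {m'} \<times> UNIV)" if m': "dist m' m < min \<epsilon> 1" for m'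
  proof -
    have "(m', y) \<in> W" if "(m', y) \<in> Z" for y
    proof (rule ccontr)
      assume "(m', y) \<notin> W"
      then have "m' \<in> K"
        using that m' unfolding K_def dist_real_def by (intro image_eqI[of _ fst "(m', y)"]) auto
      moreover have "m' \<in> ball m \<epsilon>" using m' by (simp add: dist_commute)
      ultimately show False using \<epsilon>(2) by blast
    qed
    then show ?thesis
      using single_valuedD[OF W(3)] by (intro single_valuedI) blast
  qed
  moreover have "min \<epsilon> 1 > 0" using \<epsilon>(1) by simp
  ultimately show ?thesis by blast
qed

lemma single_valued_fibre_limit:
  fixes Z :: "(real \<times> 'a::metric_space) set"
  assumes continue: "\<And>x W. (m, x) \<in> Z \<Longrightarrow> open W \<Longrightarrow> (m, x) \<in> W \<Longrightarrow>
      \<exists>\<delta>>0. \<forall>m'. \<bar>m' - m\<bar> < \<delta> \<longrightarrow> (\<exists>y. (m', y) \<in> Z \<inter> W)"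
    and m: "m \<in> closure {m'. single_valued (Z \<inter> {m'} \<times> UNIV)}"
  shows "single_valued (Z \<inter> {m} \<times> UNIV)"
proof (rule single_valuedI, rule ccontr)
  fix m0 a b assume "(m0, a) \<in> Z \<inter> {m} \<times> UNIV" "(m0, b) \<in> Z \<inter> {m} \<times> UNIV" "a \<noteq> b"
  then have ab: "(m, a) \<in> Z" "(m, b) \<in> Z" "a \<noteq> b" by auto
  define d where "d = dist a b"
  have "d > 0" using ab(3) by (simp add: d_def)
  obtain \<delta>1 where \<delta>1: "\<delta>1 > 0" "\<And>m'. \<bar>m' - m\<bar> < \<delta>1 \<Longrightarrow> \<exists>y. (m', y) \<in> Z \<inter> ball (m, a) (d/2)"
    using continue[OF ab(1), of "ball (m, a) (d/2)"] \<open>d > 0\<close> by auto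
  obtain \<delta>2 where \<delta>2: "\<delta>2 > 0" "\<And>m'. \<bar>m' - m\<bar> < \<delta>2 \<Longrightarrow> \<exists>y. (m', y) \<in> Z \<inter> ball (m, b) (d/2)"
    using continue[OF ab(2), of "ball (m, b) (d/2)"] \<open>d > 0\<close> by auto
  have "min \<delta>1 \<delta>2 > 0" using \<delta>1(1) \<delta>2(1) by simp
  then obtain m' where m': "single_valued (Z \<inter> {m'} \<times> UNIV)" "dist m' m < min \<delta>1 \<delta>2"
    using m closure_approachable[of m "{m'. single_valued (Z \<inter> {m'} \<times> UNIV)}"] by blast
  then have "\<bar>m' - m\<bar> < \<delta>1" "\<bar>m' - m\<bar> < \<delta>2" by (auto simp: dist_real_def)
  then obtain y1 y2 where y: "(m', y1) \<in> Z \<inter> ball (m, a) (d/2)" "(m', y2) \<in> Z \<inter> ball (m, b) (d/2)"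
    using \<delta>1(2) \<delta>2(2) by meson
  then have "y1 = y2" by (intro single_valuedD[OF m'(1)]) auto
  then have "dist (m, a) (m, b) < d"
    using y dist_triangle_half_r[of "(m', y2)" "(m, a)" d "(m, b)"] by (auto simp: dist_commute)
  then show False by (simp add: dist_Pair_Pair d_def)
qed

lemma single_valued_if_connected:
  fixes Z :: "(real \<times> 'a::metric_space) set"
  assumes I: "connected I"
    and proper: "\<And>a b. compact (Z \<inter> {a..b} \<times> UNIV)"
    and continue: "\<And>m x W. m \<in> I \<Longrightarrow> (m, x) \<in> Z \<Longrightarrow> open W \<Longrightarrow> (m, x) \<in> W \<Longrightarrow>
      \<exists>\<delta>>0. \<forall>m'. \<bar>m' - m\<bar> < \<delta> \<longrightarrow> (\<exists>y. (m', y) \<in> Z \<inter> W)"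
    and isolated: "\<And>m x. m \<in> I \<Longrightarrow> (m, x) \<in> Z \<Longrightarrow> \<exists>W. open W \<and> (m, x) \<in> W \<and> single_valued (Z \<inter> W)"
    and start: "m1 \<in> I" "single_valued (Z \<inter> {m1} \<times> UNIV)"
  shows "single_valued (Z \<inter> I \<times> UNIV)"
proof -
  define T where "T = {m\<in>I. single_valued (Z \<inter> {m} \<times> UNIV)}"
  have "T = I"
  proof (rule connected_subset_eq_if_open_closed[OF I])
    show "T \<subseteq> I" "T \<noteq> {}"
      using start by (auto simp: T_def)
  next
    fix m assume m: "m \<in> T"
    have "\<exists>W. open W \<and> (\<forall>x. (m, x) \<in> Z \<longrightarrow> (m, x) \<in> W) \<and> single_valued (Z \<inter> W)"
    proof (cases "\<exists>x. (m, x) \<in> Z")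
      case True
      then obtain x0 where x0: "(m, x0) \<in> Z" by blast
      moreover have "m \<in> I" using m by (simp add: T_def)
      ultimately obtain W where "open W" "(m, x0) \<in> W" "single_valued (Z \<inter> W)"
        using isolated by blast
      moreover have "x = x0" if "(m, x) \<in> Z" for x
        using m that x0 by (auto simp: T_def dest: single_valuedD)
      ultimately show ?thesis by blast
    next
      case False
      then show ?thesis by (intro exI[of _ "{}"]) (auto simp: single_valued_def)
    qed
    then obtain \<epsilon> where "\<epsilon> > 0" "\<forall>m'. dist m' m < \<epsilon> \<longrightarrow> single_valued (Z \<inter> {m'} \<times> UNIV)"
      using single_valued_fibres_near[OF proper] by metis
    then show "\<exists>\<epsilon>>0. \<forall>m'\<in>I. dist m' m < \<epsilon> \<longrightarrow> m' \<in> T"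
      by (auto simp: T_def)
  next
    fix m assume "m \<in> I" "m \<in> closure T"
    moreover have "closure T \<subseteq> closure {m'. single_valued (Z \<inter> {m'} \<times> UNIV)}"
      by (rule closure_mono) (auto simp: T_def)
    ultimately show "m \<in> T"
      using single_valued_fibre_limit[of m Z] continue by (auto simp: T_def)
  qed
  then show ?thesis
    by (auto simp: T_def single_valued_def)
qed

locale mutation_system =
  fixes N :: nat and n :: "nat \<Rightarrow> nat" and e :: "'k::finite \<Rightarrow> nat \<times> nat"
    and f :: "nat \<Rightarrow> nat \<Rightarrow> real^'k \<Rightarrow> real" and U :: "(real^'k) set"
    and c :: "real^'k"
  assumes bij: "bij_betw e UNIV (Sidx N n)"
    and open_U: "open U" and Simplex_subset_U: "Simplex N n e \<subseteq> U"
    and C1: "\<forall>(i,h)\<in>Sidx N n. C1_on (f i h) U"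
    and c_interior: "c \<in> intSimplex N n e"
begin

lemma e_in_Sidx: "e j \<in> Sidx N n"
  using bij_betw_imp_surj_on[OF bij] by blast

lemma inv_e_e [simp]: "inv e (e j) = j"
  using bij_betw_imp_inj_on[OF bij] by simp

lemma e_inv_e: "p \<in> Sidx N n \<Longrightarrow> e (inv e p) = p"
  using bij_betw_imp_surj_on[OF bij] by (metis f_inv_into_f)

lemma co_e [simp]: "co e x (fst (e j)) (snd (e j)) = x $ j"
  by (simp add: co_def)

lemma e_bounds: "fst (e j) \<in> {1..N}" "snd (e j) \<in> {1..n (fst (e j))}"
  using e_in_Sidx[of j] by (auto simp: Sidx_def)

lemma ball_Sidx_iff: "(\<forall>p\<in>Sidx N n. Q p) \<longleftrightarrow> (\<forall>j. Q (e j))"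
  using e_in_Sidx e_inv_e by metis

lemma Simplex_iff:
  "x \<in> Simplex N n e \<longleftrightarrow> (\<forall>j. 0 \<le> x $ j) \<and> (\<forall>i\<in>{1..N}. (\<Sum>h=1..n i. co e x i h) = 1)"
  unfolding Simplex_def mem_Collect_eq case_prod_beta ball_Sidx_iff[of "\<lambda>p. 0 \<le> co e x (fst p) (snd p)"]
  by simp

lemma c_in_Simplex: "c \<in> Simplex N n e"
  using c_interior by (simp add: intSimplex_def)

lemma n_pos: assumes "i \<in> {1..N}" shows "1 \<le> n i"
proof -
  have "(\<Sum>h=1..n i. co e c i h) = 1" using c_in_Simplex assms by (simp add: Simplex_iff)
  then show ?thesis by (cases "n i") auto
qed

lemma c_pos: "0 < c $ j"
  using c_interior ball_Sidx_iff[of "\<lambda>p. 0 < co e c (fst p) (snd p)"]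
  by (auto simp: intSimplex_def case_prod_beta)

lemma sum_split_last: "1 \<le> n i \<Longrightarrow> (\<Sum>h=1..n i. g h) = g (n i) + (\<Sum>h=1..<n i. g h :: real)"
  by (simp add: atLeastLessThanSuc_atLeastAtMost[symmetric] del: atLeastLessThanSuc_atLeastAtMost)

lemma Simplex_closed: "closed (Simplex N n e)"
proof -
  have "Simplex N n e = (\<Inter>j. {x. 0 \<le> x $ j}) \<inter> (\<Inter>i\<in>{1..N}. {x. (\<Sum>h=1..n i. x $ inv e (i,h)) = 1})"
    by (auto simp: Simplex_iff co_def)
  then show ?thesis
    by (simp only:) (intro closed_Int closed_INT ballI closed_Collect_le closed_Collect_eq
        continuous_on_const continuous_on_sum linear_continuous_on[OF bounded_linear_vec_nth])
qed

lemma Simplex_le_1: "x \<in> Simplex N n e \<Longrightarrow> x $ j \<le> 1"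
  using member_le_sum[of "snd (e j)" "{1..n (fst (e j))}" "co e x (fst (e j))"] e_bounds[of j]
  by (auto simp: Simplex_iff co_def)

lemma Simplex_compact: "compact (Simplex N n e)"
proof -
  have "Simplex N n e \<subseteq> cbox 0 (\<chi> j. 1)"
    using Simplex_le_1 by (auto simp: mem_box_cart Simplex_iff)
  then show ?thesis
    using Simplex_closed bounded_cbox bounded_subset by (metis compact_eq_bounded_closed)
qed

lemma Simplex_convex: "convex (Simplex N n e)"
  unfolding convex_def
proof (intro ballI allI impI)
  fix x y :: "real^'k" and u v :: real
  assume "x \<in> Simplex N n e" "y \<in> Simplex N n e" "0 \<le> u" "0 \<le> v" "u + v = 1"
  moreover have "(\<Sum>h=1..n i. co e (u *\<^sub>R x + v *\<^sub>R y) i h) =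
      u * (\<Sum>h=1..n i. co e x i h) + v * (\<Sum>h=1..n i. co e y i h)" for i
    by (simp add: co_def sum.distrib sum_distrib_left)
  ultimately show "u *\<^sub>R x + v *\<^sub>R y \<in> Simplex N n e"
    by (simp add: Simplex_iff)
qed

definition fderiv :: "nat \<Rightarrow> nat \<Rightarrow> real^'k \<Rightarrow> ((real^'k) \<Rightarrow>\<^sub>L real)" where
  "fderiv i h = (SOME f'. (\<forall>x\<in>U. (f i h has_derivative blinfun_apply (f' x)) (at x)) \<and> continuous_on U f')"

lemma fderiv: assumes "(i,h) \<in> Sidx N n"
  shows "x \<in> U \<Longrightarrow> (f i h has_derivative blinfun_apply (fderiv i h x)) (at x)"
    and "continuous_on U (fderiv i h)"
proof -
  have "\<exists>f'. (\<forall>x\<in>U. (f i h has_derivative blinfun_apply (f' x)) (at x)) \<and> continuous_on U f'"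
    using C1 assms by (auto simp: C1_on_def)
  from someI_ex[OF this] show "x \<in> U \<Longrightarrow> (f i h has_derivative blinfun_apply (fderiv i h x)) (at x)"
    and "continuous_on U (fderiv i h)"
    unfolding fderiv_def by auto
qed

lemma continuous_on_f: "(i,h) \<in> Sidx N n \<Longrightarrow> continuous_on U (f i h)"
  by (meson fderiv(1) has_derivative_at_withinI has_derivative_continuous_on)

definition phi_deriv :: "nat \<Rightarrow> nat \<Rightarrow> real^'k \<Rightarrow> real^'k \<Rightarrow> real" where
  "phi_deriv i h x v = co e v i h * (f i h x - fbar n e f i x) +
     co e x i h * (fderiv i h x v - (\<Sum>h'=1..n i. co e v i h' * f i h' x + co e x i h' * fderiv i h' x v))"

lemma has_derivative_co: "(g has_derivative g') F \<Longrightarrow> ((\<lambda>x. co e (g x) i h) has_derivative (\<lambda>v. co e (g' v) i h)) F"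
  unfolding co_def by (rule bounded_linear.has_derivative[OF bounded_linear_vec_nth])

lemma phi_has_derivative:
  assumes "(i,h) \<in> Sidx N n" "x \<in> U"
  shows "(phi n e f i h has_derivative phi_deriv i h x) (at x)"
proof -
  have "h' \<in> {1..n i} \<Longrightarrow> (i,h') \<in> Sidx N n" for h'
    using assms(1) by (auto simp: Sidx_def)
  then have "(fbar n e f i has_derivative
      (\<lambda>v. \<Sum>h'=1..n i. co e v i h' * f i h' x + co e x i h' * fderiv i h' x v)) (at x)"
    unfolding fbar_def using assms(2)
    by (auto intro!: derivative_eq_intros has_derivative_co fderiv(1) simp: algebra_simps)
  then show ?thesis
    unfolding phi_def[abs_def] phi_deriv_def using assms
    by (auto intro!: derivative_eq_intros has_derivative_co fderiv(1) simp: algebra_simps)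
qed

lemma continuous_on_phi_deriv:
  assumes "(i,h) \<in> Sidx N n"
  shows "continuous_on U (\<lambda>x. phi_deriv i h x v)"
proof -
  have "h' \<in> {1..n i} \<Longrightarrow> (i,h') \<in> Sidx N n" for h'
    using assms by (auto simp: Sidx_def)
  then have "h' \<in> {1..n i} \<Longrightarrow> continuous_on U (f i h')"
    and "h' \<in> {1..n i} \<Longrightarrow> continuous_on U (fderiv i h')" for h'
    using continuous_on_f fderiv(2) by blast+
  moreover have "h \<in> {1..n i}" using assms by (auto simp: Sidx_def)
  ultimately show ?thesis
    unfolding phi_deriv_def fbar_def co_def by (intro continuous_intros) auto
qed

definition phi_vec :: "real^'k \<Rightarrow> real^'k" where
  "phi_vec x = (\<chi> j. phi n e f (fst (e j)) (snd (e j)) x)"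

definition phi_vec_deriv :: "real^'k \<Rightarrow> real^'k \<Rightarrow> real^'k" where
  "phi_vec_deriv x v = (\<chi> j. phi_deriv (fst (e j)) (snd (e j)) x v)"

lemma phi_vec_has_derivative: "x \<in> U \<Longrightarrow> (phi_vec has_derivative phi_vec_deriv x) (at x)"
  unfolding phi_vec_def[abs_def] phi_vec_deriv_def[abs_def]
  by (intro has_derivative_vec_lambda phi_has_derivative) (auto simp: e_in_Sidx)

lemma continuous_on_phi_vec_deriv: "continuous_on U (\<lambda>x. phi_vec_deriv x v)"
  unfolding phi_vec_deriv_def
  by (intro continuous_on_vec_lambda continuous_on_phi_deriv) (simp add: e_in_Sidx)

lemma continuous_on_phi_vec: "continuous_on U phi_vec"
  by (meson phi_vec_has_derivative has_derivative_at_withinI has_derivative_continuous_on)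

lemma phi_vec_bounded: obtains K where "\<And>x. x \<in> Simplex N n e \<Longrightarrow> norm (phi_vec x) \<le> K"
proof -
  have "compact (phi_vec ` Simplex N n e)"
    using Simplex_compact continuous_on_phi_vec Simplex_subset_U
    by (intro compact_continuous_image) (auto intro: continuous_on_subset)
  then show ?thesis
    using that compact_imp_bounded bounded_iff by (metis image_eqI)
qed

lemma phi_vec_lipschitz:
  obtains B where "\<And>x y. x \<in> Simplex N n e \<Longrightarrow> y \<in> Simplex N n e \<Longrightarrow>
    norm (phi_vec x - phi_vec y) \<le> B * norm (x - y)"
proof -
  define D where "D x = Blinfun (phi_vec_deriv x)" for x
  have D: "blinfun_apply (D x) = phi_vec_deriv x" if "x \<in> U" for x
    unfolding D_def using that phi_vec_has_derivative has_derivative_bounded_linear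
      bounded_linear_Blinfun_apply by blast
  have "continuous_on U D"
  proof (rule continuous_on_blinfun_componentwise)
    fix v
    show "continuous_on U (\<lambda>x. blinfun_apply (D x) v)"
      using continuous_on_phi_vec_deriv[of v] by (rule continuous_on_eq) (simp add: D)
  qed
  then have "compact (D ` Simplex N n e)"
    using Simplex_compact Simplex_subset_U by (intro compact_continuous_image) (auto intro: continuous_on_subset)
  then obtain B where B: "\<And>x. x \<in> Simplex N n e \<Longrightarrow> norm (D x) \<le> B"
    using compact_imp_bounded bounded_iff by (metis image_eqI)
  have "norm (phi_vec x - phi_vec y) \<le> B * norm (x - y)"
    if "x \<in> Simplex N n e" "y \<in> Simplex N n e" for x y
  proof (rule differentiable_bound[OF Simplex_convex _ _ that])
    fix z assume z: "z \<in> Simplex N n e"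
    then have "z \<in> U" using Simplex_subset_U by blast
    then show "(phi_vec has_derivative phi_vec_deriv z) (at z within Simplex N n e)"
      and "onorm (phi_vec_deriv z) \<le> B"
      using phi_vec_has_derivative B[OF z] D[of z]
      by (auto intro: has_derivative_at_withinI simp: norm_blinfun.rep_eq)
  qed
  then show ?thesis using that by blast
qed

definition mut_field :: "real \<Rightarrow> real^'k \<Rightarrow> real^'k" where
  "mut_field m x = phi_vec x + m *\<^sub>R (c - x)"

definition equilibrium :: "real \<Rightarrow> real^'k \<Rightarrow> bool" where
  "equilibrium m x \<longleftrightarrow> x \<in> Simplex N n e \<and> mut_field m x = 0"

lemma mut_field_nth: "mut_field m x $ j = phiM n e f m c (fst (e j)) (snd (e j)) x"
  by (simp add: mut_field_def phi_vec_def phiM_def)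

lemma mut_eq_iff_equilibrium: "mut_eq N n e f c m x \<longleftrightarrow> equilibrium m x"
proof -
  have "(\<forall>(i,h)\<in>Sidx N n. phiM n e f m c i h x = 0) \<longleftrightarrow> (\<forall>j. mut_field m x $ j = 0)"
    unfolding case_prod_beta ball_Sidx_iff[of "\<lambda>p. phiM n e f m c (fst p) (snd p) x = 0"] mut_field_nth ..
  then show ?thesis
    unfolding mut_eq_def equilibrium_def by (simp add: vec_eq_iff)
qed

lemma equilibrium_phi_vec: "equilibrium m x \<Longrightarrow> phi_vec x = m *\<^sub>R (x - c)"
  by (simp add: equilibrium_def mut_field_def algebra_simps)

lemma equilibrium_pos:
  assumes "0 < m" "equilibrium m x"
  shows "0 < x $ j"
proof -
  have "0 \<le> x $ j" "mut_field m x $ j = 0"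
    using assms(2) by (auto simp: equilibrium_def Simplex_iff)
  moreover have "x $ j = 0 \<Longrightarrow> mut_field m x $ j = m * c $ j"
    by (simp add: mut_field_def phi_vec_def phi_def)
  ultimately show ?thesis
    using assms(1) c_pos[of j] by force
qed

text \<open>For large mutation rates the fixed-point equation \<open>x = c + \<phi>(x)/m\<close> is a contraction.\<close>

lemma equilibria_unique_large:
  obtains m1 where "\<And>m x y. m \<ge> m1 \<Longrightarrow> equilibrium m x \<Longrightarrow> equilibrium m y \<Longrightarrow> x = y"
proof -
  obtain B where B: "\<And>x y. x \<in> Simplex N n e \<Longrightarrow> y \<in> Simplex N n e \<Longrightarrow>
      norm (phi_vec x - phi_vec y) \<le> B * norm (x - y)"
    using phi_vec_lipschitz by blast
  have "x = y" if m: "m \<ge> max B 0 + 1" and eq: "equilibrium m x" "equilibrium m y" for m x y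
  proof (rule ccontr)
    assume "x \<noteq> y"
    have "phi_vec x - phi_vec y = m *\<^sub>R (x - y)"
      using equilibrium_phi_vec[OF eq(1)] equilibrium_phi_vec[OF eq(2)]
      by (simp add: scaleR_diff_right)
    then have "m * norm (x - y) \<le> B * norm (x - y)"
      using B[of x y] eq m by (simp add: equilibrium_def)
    then show False using \<open>x \<noteq> y\<close> m by simp
  qed
  then show ?thesis using that by blast
qed

lemma sum_phiM:
  assumes "i \<in> {1..N}" "(\<Sum>h=1..n i. co e x i h) = 1"
  shows "(\<Sum>h=1..n i. phiM n e f m c i h x) = 0"
proof -
  have "(\<Sum>h=1..n i. phiM n e f m c i h x) =
     (\<Sum>h=1..n i. co e x i h * f i h x) - (\<Sum>h=1..n i. co e x i h) * fbar n e f i x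
      + m * ((\<Sum>h=1..n i. co e c i h) - (\<Sum>h=1..n i. co e x i h))"
    unfolding phiM_def phi_def
    by (simp add: sum.distrib sum_subtractf sum_distrib_left sum_distrib_right algebra_simps)
  also have "\<dots> = 0"
    using assms c_in_Simplex by (simp add: fbar_def Simplex_iff)
  finally show ?thesis .
qed

definition is_last :: "'k \<Rightarrow> bool" where
  "is_last j \<longleftrightarrow> snd (e j) = n (fst (e j))"

lemma is_last_inv_e:
  assumes "i \<in> {1..N}"
  shows "is_last (inv e (i, n i))" "e (inv e (i, n i)) = (i, n i)"
proof -
  have "(i, n i) \<in> Sidx N n" using assms n_pos[OF assms] by (auto simp: Sidx_def)
  then show "e (inv e (i, n i)) = (i, n i)" "is_last (inv e (i, n i))"
    using e_inv_e by (auto simp: is_last_def)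
qed

lemma co_last: "is_last j \<Longrightarrow> co e x (fst (e j)) (n (fst (e j))) = x $ j"
  unfolding is_last_def by (metis co_e)

text \<open>In \<open>\<Psi>(m, x)\<close> the equation for the last type of each population is replaced by the
  normalisation of that population; by \<open>sum_phiM\<close> the dropped equation is implied by the
  others on \<open>\<Delta>\<close>.\<close>

definition Psi :: "real \<times> (real^'k) \<Rightarrow> real \<times> (real^'k)" where
  "Psi z = (fst z, \<chi> j. if is_last j then (\<Sum>h=1..n (fst (e j)). co e (snd z) (fst (e j)) h) - 1
                       else mut_field (fst z) (snd z) $ j)"

definition Psi_deriv :: "real \<times> (real^'k) \<Rightarrow> real \<times> (real^'k) \<Rightarrow> real \<times> (real^'k)" where
  "Psi_deriv z w = (fst w, \<chi> j. if is_last j then (\<Sum>h=1..n (fst (e j)). co e (snd w) (fst (e j)) h)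
      else phi_vec_deriv (snd z) (snd w) $ j + fst w * (c $ j - snd z $ j) - fst z * snd w $ j)"

lemma Psi_has_derivative:
  assumes "snd z \<in> U"
  shows "(Psi has_derivative Psi_deriv z) (at z)"
proof -
  have co_snd: "((\<lambda>z. co e (snd z) i h) has_derivative (\<lambda>w. co e (snd w) i h)) (at z)" for i h
    by (intro has_derivative_co has_derivative_snd has_derivative_ident)
  have phi_snd: "((\<lambda>z. phi_vec (snd z) $ j) has_derivative (\<lambda>w. phi_vec_deriv (snd z) (snd w) $ j)) (at z)" for j
  proof -
    have "((\<lambda>z. phi_vec (snd z)) has_derivative (\<lambda>w. phi_vec_deriv (snd z) (snd w))) (at z)"
      using diff_chain_at[OF has_derivative_snd[OF has_derivative_ident] phi_vec_has_derivative[OF assms]]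
      by (simp add: o_def)
    then show ?thesis by (rule bounded_linear.has_derivative[OF bounded_linear_vec_nth])
  qed
  have "((\<lambda>z. if is_last j then (\<Sum>h=1..n (fst (e j)). co e (snd z) (fst (e j)) h) - 1
                else mut_field (fst z) (snd z) $ j)
     has_derivative (\<lambda>w. if is_last j then (\<Sum>h=1..n (fst (e j)). co e (snd w) (fst (e j)) h)
      else phi_vec_deriv (snd z) (snd w) $ j + fst w * (c $ j - snd z $ j) - fst z * snd w $ j)) (at z)" for j
  proof (cases "is_last j")
    case True
    have "((\<lambda>z. (\<Sum>h=1..n (fst (e j)). co e (snd z) (fst (e j)) h) - 1) has_derivative
       (\<lambda>w. (\<Sum>h=1..n (fst (e j)). co e (snd w) (fst (e j)) h))) (at z)"
      by (intro derivative_eq_intros) (auto intro: co_snd)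
    then show ?thesis using True by simp
  next
    case False
    have "((\<lambda>z. phi_vec (snd z) $ j + fst z * (c $ j - snd z $ j)) has_derivative
       (\<lambda>w. phi_vec_deriv (snd z) (snd w) $ j + (fst z * (0 - snd w $ j) + fst w * (c $ j - snd z $ j)))) (at z)"
      using bounded_linear.has_derivative[OF bounded_linear_vec_nth has_derivative_snd[OF has_derivative_ident]]
      by (intro derivative_eq_intros) (auto intro: phi_snd)
    then show ?thesis
      using False by (simp add: mut_field_def algebra_simps)
  qed
  then show ?thesis
    unfolding Psi_def[abs_def] Psi_deriv_def[abs_def]
    by (intro has_derivative_Pair has_derivative_fst has_derivative_ident has_derivative_vec_lambda)
qed

definition Psi' :: "real \<times> (real^'k) \<Rightarrow> (real \<times> (real^'k)) \<Rightarrow>\<^sub>L (real \<times> (real^'k))" where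
  "Psi' z = Blinfun (Psi_deriv z)"

lemma Psi'_apply: "snd z \<in> U \<Longrightarrow> blinfun_apply (Psi' z) = Psi_deriv z"
  unfolding Psi'_def using Psi_has_derivative has_derivative_bounded_linear
  by (blast intro: bounded_linear_Blinfun_apply)

lemma continuous_on_Psi': "continuous_on (UNIV \<times> U) Psi'"
proof (rule continuous_on_blinfun_componentwise)
  fix w :: "real \<times> (real^'k)"
  have "continuous_on (UNIV \<times> U) (\<lambda>z. Psi_deriv z w)"
    unfolding Psi_deriv_def
  proof (intro continuous_intros continuous_on_vec_lambda)
    fix j
    have dj: "continuous_on (UNIV \<times> U) (\<lambda>z. phi_vec_deriv (snd z) (snd w) $ j)"
      by (intro continuous_intros continuous_on_compose2[OF continuous_on_phi_vec_deriv continuous_on_snd]) auto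
    show "continuous_on (UNIV \<times> U) (\<lambda>z. if is_last j then (\<Sum>h=1..n (fst (e j)). co e (snd w) (fst (e j)) h)
      else phi_vec_deriv (snd z) (snd w) $ j + fst w * (c $ j - snd z $ j) - fst z * snd w $ j)"
      by (cases "is_last j") (auto intro!: continuous_intros dj)
  qed
  then show "continuous_on (UNIV \<times> U) (\<lambda>z. blinfun_apply (Psi' z) w)"
    by (rule continuous_on_eq) (auto simp: Psi'_apply)
qed

lemma Psi_equilibrium: "equilibrium m x \<Longrightarrow> Psi (m, x) = (m, 0)"
  using e_bounds by (auto simp: Psi_def equilibrium_def Simplex_iff vec_eq_iff)

lemma equilibrium_if_Psi:
  assumes Psi: "Psi (m, x) = (m, 0)" and nonneg: "\<forall>j. 0 \<le> x $ j"
  shows "equilibrium m x"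
proof -
  have comp: "(if is_last j then (\<Sum>h=1..n (fst (e j)). co e x (fst (e j)) h) - 1 else mut_field m x $ j) = 0" for j
  proof -
    have "snd (Psi (m, x)) $ j = 0" using Psi by simp
    then show ?thesis by (simp only: Psi_def snd_conv fst_conv vec_lambda_beta)
  qed
  have sums: "(\<Sum>h=1..n i. co e x i h) = 1" if "i \<in> {1..N}" for i
    using comp[of "inv e (i, n i)"] is_last_inv_e[OF that] by simp
  have "mut_field m x $ j = 0" for j
  proof (cases "is_last j")
    case False
    then show ?thesis using comp[of j] by simp
  next
    case True
    define i where "i = fst (e j)"
    have i: "i \<in> {1..N}" using e_bounds by (simp add: i_def)
    have "phiM n e f m c i h x = 0" if "h \<in> {1..<n i}" for h
    proof -
      have "(i, h) \<in> Sidx N n" using that i by (auto simp: Sidx_def)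
      then have "\<not> is_last (inv e (i, h))" "e (inv e (i, h)) = (i, h)"
        using that e_inv_e by (auto simp: is_last_def)
      then show ?thesis using comp[of "inv e (i, h)"] mut_field_nth by simp
    qed
    then have "(\<Sum>h=1..<n i. phiM n e f m c i h x) = 0" by simp
    then have "phiM n e f m c i (n i) x = 0"
      using sum_phiM[OF i sums[OF i], of m] sum_split_last[OF n_pos[OF i]] by simp
    then show ?thesis
      using mut_field_nth[of m x j] True by (simp add: i_def is_last_def)
  qed
  then show ?thesis
    using sums nonneg by (simp add: equilibrium_def Simplex_iff vec_eq_iff)
qed

lemma not_is_last_iff_Red: "\<not> is_last j \<longleftrightarrow> e j \<in> Red N n"
  using e_bounds[of j] by (auto simp: is_last_def Red_def)

lemma finite_Red: "finite (Red N n)"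
proof -
  have "Red N n \<subseteq> e ` UNIV" using bij_betw_imp_surj_on[OF bij] by (auto simp: Red_def Sidx_def)
  then show ?thesis by (rule finite_subset) simp
qed

definition lift_lin :: "real^'k \<Rightarrow> real^'k" where
  "lift_lin y = (\<chi> j. if is_last j then - (\<Sum>k=1..<n (fst (e j)). co e y (fst (e j)) k) else y $ j)"

lemma linear_lift_lin: "linear lift_lin"
  by (rule linearI) (simp_all add: lift_lin_def vec_eq_iff co_def sum.distrib sum_distrib_left)

lemma lift_line:
  assumes "x \<in> Simplex N n e"
  shows "lift n e (x + t *\<^sub>R a) = x + t *\<^sub>R lift_lin a"
proof -
  have lift: "lift n e y = lift_lin y + (\<chi> j. if is_last j then 1 else 0)" for y
    by (simp add: lift_def lift_lin_def is_last_def vec_eq_iff)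
  have "lift n e x $ j = x $ j" for j
  proof (cases "is_last j")
    case True
    define i where "i = fst (e j)"
    have i: "i \<in> {1..N}" using e_bounds by (simp add: i_def)
    have "(\<Sum>h=1..n i. co e x i h) = 1" using assms i by (simp add: Simplex_iff)
    then have "co e x i (n i) + (\<Sum>h=1..<n i. co e x i h) = 1"
      using sum_split_last[OF n_pos[OF i]] by simp
    moreover have "co e x i (n i) = x $ j" using co_last[OF True] by (simp add: i_def)
    ultimately show ?thesis using True by (simp add: lift_def is_last_def i_def)
  next
    case False then show ?thesis by (simp add: lift_def is_last_def)
  qed
  then have "lift n e x = x" by (simp add: vec_eq_iff)
  then show ?thesis
    using linear_lift_lin unfolding lift by (simp add: linear_add linear_scale algebra_simps)
qed

lemma redJac_eq:
  assumes "p \<in> Sidx N n" "x \<in> Simplex N n e"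
  shows "redJac n e f x p q = phi_deriv (fst p) (snd p) x (lift_lin (axis (inv e q) 1))"
proof -
  define w where "w = lift_lin (axis (inv e q) 1)"
  have p: "(fst p, snd p) \<in> Sidx N n" "x \<in> U" using assms Simplex_subset_U by auto
  have line: "((\<lambda>t::real. x + t *\<^sub>R w) has_derivative (\<lambda>t. t *\<^sub>R w)) (at 0)"
    by (intro derivative_eq_intros) auto
  have "((\<lambda>t. phi n e f (fst p) (snd p) (x + t *\<^sub>R w)) has_derivative
        (\<lambda>t. phi_deriv (fst p) (snd p) x (t *\<^sub>R w))) (at 0)"
    using diff_chain_at[OF line] phi_has_derivative[OF p] by (simp add: o_def)
  moreover have "(\<lambda>t. phi_deriv (fst p) (snd p) x (t *\<^sub>R w)) = (*) (phi_deriv (fst p) (snd p) x w)"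
    using phi_has_derivative[OF p] has_derivative_linear
    by (force simp: linear_scale mult.commute fun_eq_iff)
  ultimately have "((\<lambda>t. phi n e f (fst p) (snd p) (x + t *\<^sub>R w)) has_real_derivative
      phi_deriv (fst p) (snd p) x w) (at 0)"
    by (simp add: has_field_derivative_def)
  then show ?thesis
    using lift_line[OF assms(2)] by (simp add: redJac_def w_def DERIV_imp_deriv)
qed

lemma tangent_eq_lift_lin:
  assumes "\<And>i. i \<in> {1..N} \<Longrightarrow> (\<Sum>h=1..n i. co e v i h) = 0"
  shows "v = (\<Sum>q\<in>Red N n. co e v (fst q) (snd q) *\<^sub>R lift_lin (axis (inv e q) 1))"
proof -
  define u where "u = (\<Sum>q\<in>Red N n. co e v (fst q) (snd q) *\<^sub>R axis (inv e q) (1::real))"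
  have "u $ j = v $ j" if "\<not> is_last j" for j
  proof -
    have "u $ j = (\<Sum>q\<in>Red N n. if q = e j then co e v (fst q) (snd q) else 0)"
      unfolding u_def
    proof (simp, rule sum.cong[OF refl])
      fix q assume "q \<in> Red N n"
      then have "(inv e q = j) = (q = e j)"
        using e_inv_e by (auto simp: Red_def Sidx_def)
      then show "co e v (fst q) (snd q) * axis (inv e q) 1 $ j = (if q = e j then co e v (fst q) (snd q) else 0)"
        by (auto simp: axis_def)
    qed
    also have "\<dots> = v $ j"
      using that not_is_last_iff_Red finite_Red by simp
    finally show ?thesis .
  qed
  moreover have "co e u i k = co e v i k" if "i = fst (e j)" "k \<in> {1..<n i}" for i k j
  proof -
    have "(i, k) \<in> Sidx N n" using that e_bounds[of j] by (auto simp: Sidx_def)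
    then have "\<not> is_last (inv e (i, k))" using e_inv_e that by (simp add: is_last_def)
    then show ?thesis using calculation by (simp add: co_def)
  qed
  ultimately have "lift_lin u = lift_lin v"
    by (auto simp: lift_lin_def vec_eq_iff intro!: sum.cong)
  also have "lift_lin v = v"
  proof -
    have "lift_lin v $ j = v $ j" if "is_last j" for j
    proof -
      define i where "i = fst (e j)"
      have i: "i \<in> {1..N}" using e_bounds by (simp add: i_def)
      have "co e v i (n i) + (\<Sum>h=1..<n i. co e v i h) = 0"
        using assms[OF i] sum_split_last[OF n_pos[OF i]] by simp
      moreover have "co e v i (n i) = v $ j" using co_last[OF that] by (simp add: i_def)
      ultimately show ?thesis using that by (simp add: lift_lin_def i_def[symmetric])
    qed
    then show ?thesis by (simp add: vec_eq_iff lift_lin_def)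
  qed
  finally show ?thesis
    unfolding u_def using linear_lift_lin by (simp add: linear_sum linear_scale)
qed

lemma redJac_tangent:
  assumes x: "x \<in> Simplex N n e" and p: "p \<in> Red N n"
    and tangent: "\<And>i. i \<in> {1..N} \<Longrightarrow> (\<Sum>h=1..n i. co e v i h) = 0"
  shows "(\<Sum>q\<in>Red N n. redJac n e f x p q * co e v (fst q) (snd q)) = phi_vec_deriv x v $ inv e p"
proof -
  have "p \<in> Sidx N n" "x \<in> U" using p x Simplex_subset_U by (auto simp: Red_def Sidx_def)
  then have lin: "linear (phi_deriv (fst p) (snd p) x)"
    using phi_has_derivative[of "fst p" "snd p" x] has_derivative_linear by auto
  define u where "u q = co e v (fst q) (snd q)" for q
  have v: "v = (\<Sum>q\<in>Red N n. u q *\<^sub>R lift_lin (axis (inv e q) 1))"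
    using tangent_eq_lift_lin[OF tangent] by (simp add: u_def)
  have "(\<Sum>q\<in>Red N n. redJac n e f x p q * u q) = phi_deriv (fst p) (snd p) x v"
    using redJac_eq[OF \<open>p \<in> Sidx N n\<close> x] lin
    by (subst v) (simp add: linear_sum linear_scale mult.commute)
  also have "\<dots> = phi_vec_deriv x v $ inv e p"
    using e_inv_e[OF \<open>p \<in> Sidx N n\<close>] by (simp add: phi_vec_deriv_def)
  finally show ?thesis by (simp add: u_def)
qed

abbreviation rates :: "real set" where
  "rates \<equiv> {m. Mlow N n e f < ereal m}"

lemma real_eigenvalue_le_Mlow:
  assumes "x \<in> Simplex N n e" "p0 \<in> Red N n" "u p0 \<noteq> 0"
    and eig: "\<And>p. p \<in> Red N n \<Longrightarrow> (\<Sum>q\<in>Red N n. redJac n e f x p q * u q) = m * u p"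
  shows "ereal m \<le> Mlow N n e f"
proof -
  have "is_eig (Red N n) (redJac n e f x) (complex_of_real m)"
    unfolding is_eig_def
  proof (intro exI[of _ "\<lambda>q. complex_of_real (u q)"] conjI ballI)
    show "\<exists>p\<in>Red N n. complex_of_real (u p) \<noteq> 0" using assms(2,3) by auto
  next
    fix p assume "p \<in> Red N n"
    then show "(\<Sum>q\<in>Red N n. complex_of_real (redJac n e f x p q) * complex_of_real (u q))
        = complex_of_real m * complex_of_real (u p)"
      using eig by (simp flip: of_real_mult of_real_sum)
  qed
  then have "ereal m \<le> Sup {ereal (Re lam) | lam x. x \<in> Simplex N n e \<and> is_eig (Red N n) (redJac n e f x) lam}"
    using assms(1) by (intro Sup_upper) force
  then show ?thesis unfolding Mlow_def by (simp add: le_max_iff_disj)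
qed

text \<open>A kernel vector of \<open>D\<Psi>(m, x)\<close> is a tangent vector of \<open>\<Delta>\<close> whose reduced
  coordinates form a real eigenvector of \<open>D\<phi>\<^sup>~(x)\<close> with eigenvalue \<open>m\<close>; so for
  \<open>m > Mlow\<close> it vanishes.\<close>

lemma Psi_deriv_inj:
  assumes m: "m \<in> rates" and x: "x \<in> Simplex N n e"
  shows "inj (Psi_deriv (m, x))"
proof -
  have "x \<in> U" using x Simplex_subset_U by auto
  then have lin: "linear (Psi_deriv (m, x))"
    using Psi_has_derivative[of "(m, x)"] has_derivative_linear by auto
  show ?thesis unfolding linear_injective_0[OF lin]
  proof (intro allI impI)
    fix w assume w0: "Psi_deriv (m, x) w = 0"
    obtain dm v where w: "w = (dm, v)" by (cases w)
    have dm: "dm = 0" using arg_cong[OF w0, of fst] w by (simp add: Psi_deriv_def)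
    have comp: "(if is_last j then (\<Sum>h=1..n (fst (e j)). co e v (fst (e j)) h)
      else phi_vec_deriv x v $ j + dm * (c $ j - x $ j) - m * v $ j) = 0" for j
    proof -
      have "snd (Psi_deriv (m, x) (dm, v)) $ j = 0" using w0 w by simp
      then show ?thesis by (simp only: Psi_deriv_def snd_conv fst_conv vec_lambda_beta)
    qed
    have tangent: "(\<Sum>h=1..n i. co e v i h) = 0" if "i \<in> {1..N}" for i
      using comp[of "inv e (i, n i)"] is_last_inv_e[OF that] by simp
    define u where "u q = co e v (fst q) (snd q)" for q
    have eig: "(\<Sum>q\<in>Red N n. redJac n e f x p q * u q) = m * u p" if p: "p \<in> Red N n" for p
    proof -
      have "e (inv e p) = p" using p e_inv_e by (auto simp: Red_def Sidx_def)
      then show ?thesis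
        using redJac_tangent[OF x p tangent] comp[of "inv e p"] dm p not_is_last_iff_Red[of "inv e p"]
        by (simp add: u_def co_def)
    qed
    have "u p = 0" if "p \<in> Red N n" for p
      using real_eigenvalue_le_Mlow[OF x that _ eig] m by force
    then have "v = 0" using tangent_eq_lift_lin[OF tangent] by (simp add: u_def)
    then show "w = 0" using w dm by (simp add: zero_prod_def)
  qed
qed

lemma rates_pos: "m \<in> rates \<Longrightarrow> 0 < m"
proof -
  have "0 \<le> Mlow N n e f" by (simp add: Mlow_def)
  then show "m \<in> rates \<Longrightarrow> 0 < m"
    by (metis ereal_less(2) le_less_trans zero_ereal_def ereal_less_real_iff less_ereal.simps(1) mem_Collect_eq)
qed

text \<open>The inverse function theorem for \<open>\<Psi>\<close>, restricted to the positive orthant so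
  that the local inverse yields equilibria.\<close>

lemma Psi_local_inverse:
  assumes m0: "m0 \<in> rates" and eq: "equilibrium m0 x0"
    and W: "open W" "(m0, x0) \<in> W"
  obtains V V' g g' where "open V" "V \<subseteq> W" "\<And>z j. z \<in> V \<Longrightarrow> 0 < snd z $ j" "(m0, x0) \<in> V"
    "open V'" "(m0, 0) \<in> V'" "homeomorphism V V' Psi g" "\<And>y. y \<in> V' \<Longrightarrow> (g has_derivative g' y) (at y)"
proof -
  define Dom where "Dom = W \<inter> UNIV \<times> (U \<inter> {x. \<forall>j. 0 < x $ j})"
  have "{x::real^'k. \<forall>j. 0 < x $ j} = (\<Inter>j. {x. 0 < x $ j})" by auto
  then have "open {x::real^'k. \<forall>j. 0 < x $ j}"
    by (simp add: open_INT open_Collect_less continuous_on_const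
        linear_continuous_on[OF bounded_linear_vec_nth])
  then have "open Dom" unfolding Dom_def using W(1) open_U by (intro open_Int open_Times) auto
  have x0: "x0 \<in> Simplex N n e" using eq by (simp add: equilibrium_def)
  then have "(m0, x0) \<in> Dom"
    using W(2) Simplex_subset_U equilibrium_pos[OF rates_pos[OF m0] eq] by (auto simp: Dom_def)
  have Dom_U: "snd z \<in> U" if "z \<in> Dom" for z using that by (auto simp: Dom_def)
  obtain h where "linear h" "h \<circ> Psi_deriv (m0, x0) = id"
    using linear_injective_left_inverse Psi_deriv_inj[OF m0 x0]
      Psi_has_derivative[of "(m0, x0)"] Dom_U[OF \<open>(m0, x0) \<in> Dom\<close>] has_derivative_linear
    by (metis snd_conv)
  then have "Blinfun h o\<^sub>L Psi' (m0, x0) = id_blinfun"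
    using Psi'_apply[of "(m0, x0)"] Dom_U[OF \<open>(m0, x0) \<in> Dom\<close>]
    by (intro blinfun_eqI) (simp add: bounded_linear_Blinfun_apply linear_conv_bounded_linear pointfree_idE)
  moreover have "\<And>z. z \<in> Dom \<Longrightarrow> (Psi has_derivative blinfun_apply (Psi' z)) (at z)"
    using Psi_has_derivative Psi'_apply Dom_U by simp
  moreover have "continuous_on Dom Psi'"
    using continuous_on_Psi' by (rule continuous_on_subset) (auto simp: Dom_def)
  ultimately obtain V V' g g' where V: "open V" "V \<subseteq> Dom" "(m0, x0) \<in> V" "open V'" "Psi (m0, x0) \<in> V'"
    "homeomorphism V V' Psi g" "\<And>y. y \<in> V' \<Longrightarrow> (g has_derivative g' y) (at y)"
    using inverse_function_theorem[OF \<open>open Dom\<close> _ _ \<open>(m0, x0) \<in> Dom\<close>] by metis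
  then show ?thesis
    using Psi_equilibrium[OF eq] by (intro that[of V V' g g']) (auto simp: Dom_def)
qed

lemma equilibrium_local_branch:
  assumes m0: "m0 \<in> rates" and eq: "equilibrium m0 x0"
    and W: "open W" "(m0, x0) \<in> W"
  obtains V \<delta> \<gamma> where "open V" "V \<subseteq> W" "(m0, x0) \<in> V" "0 < \<delta>"
    "\<And>m. \<bar>m - m0\<bar> < \<delta> \<Longrightarrow> equilibrium m (\<gamma> m) \<and> (m, \<gamma> m) \<in> V"
    "\<gamma> m0 = x0" "\<exists>D. (\<gamma> has_vector_derivative D) (at m0)"
    "\<And>m x y. (m, x) \<in> V \<Longrightarrow> (m, y) \<in> V \<Longrightarrow> equilibrium m x \<Longrightarrow> equilibrium m y \<Longrightarrow> x = y"
proof -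
  obtain V V' g g' where V: "open V" "V \<subseteq> W" "\<And>z j. z \<in> V \<Longrightarrow> 0 < snd z $ j" "(m0, x0) \<in> V"
    "open V'" "(m0, 0) \<in> V'" "homeomorphism V V' Psi g" "\<And>y. y \<in> V' \<Longrightarrow> (g has_derivative g' y) (at y)"
    using Psi_local_inverse[OF assms] by blast
  have g_Psi: "\<And>z. z \<in> V \<Longrightarrow> g (Psi z) = z" and Psi_g: "\<And>y. y \<in> V' \<Longrightarrow> Psi (g y) = y"
    and g_V': "g ` V' = V"
    using V(7) by (auto simp: homeomorphism_def)
  obtain \<delta> where "0 < \<delta>" and \<delta>: "ball (m0, 0) \<delta> \<subseteq> V'"
    using V(5,6) open_contains_ball by blast
  define \<gamma> where "\<gamma> m = snd (g (m, 0))" for m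
  have branch: "equilibrium m (\<gamma> m) \<and> (m, \<gamma> m) \<in> V" if "\<bar>m - m0\<bar> < \<delta>" for m
  proof -
    have "(m, 0) \<in> V'"
      using that \<delta> by (auto simp: dist_Pair_Pair dist_real_def dist_commute)
    then have z: "g (m, 0) \<in> V" "Psi (g (m, 0)) = (m, 0)" using g_V' Psi_g by auto
    then have "g (m, 0) = (m, \<gamma> m)" by (simp add: Psi_def \<gamma>_def prod_eq_iff split: prod.splits)
    moreover have "\<forall>j. 0 \<le> \<gamma> m $ j"
      using V(3)[OF z(1)] by (simp add: \<gamma>_def less_imp_le)
    ultimately show ?thesis
      using z equilibrium_if_Psi by metis
  qed
  have "((\<lambda>m::real. (m, 0::real^'k)) has_derivative (\<lambda>t. (t, 0))) (at m0)"
    by (intro derivative_eq_intros) auto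
  then have "((\<lambda>m. g (m, 0)) has_derivative (\<lambda>t. g' (m0, 0) (t, 0))) (at m0)"
    using diff_chain_at V(8)[OF \<open>(m0, 0) \<in> V'\<close>] by (auto simp: o_def)
  then have "(\<gamma> has_derivative (\<lambda>t. snd (g' (m0, 0) (t, 0)))) (at m0)"
    unfolding \<gamma>_def[abs_def] by (rule has_derivative_snd)
  moreover have "(\<lambda>t. snd (g' (m0, 0) (t, 0))) = (\<lambda>t. t *\<^sub>R snd (g' (m0, 0) (1, 0)))"
    using has_derivative_linear[OF calculation] by (auto simp: fun_eq_iff dest: linear_scale[of _ _ 1])
  ultimately have "(\<gamma> has_vector_derivative snd (g' (m0, 0) (1, 0))) (at m0)"
    by (simp add: has_vector_derivative_def)
  moreover have "\<gamma> m0 = x0"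
    using g_Psi[OF V(4)] Psi_equilibrium[OF eq] by (simp add: \<gamma>_def)
  moreover have "x = y" if "(m, x) \<in> V" "(m, y) \<in> V" "equilibrium m x" "equilibrium m y" for m x y
    using g_Psi[OF that(1)] g_Psi[OF that(2)] Psi_equilibrium that(3,4) by fastforce
  ultimately show ?thesis
    using that V(1,2,4) \<open>0 < \<delta>\<close> branch by blast
qed

abbreviation equilibria :: "(real \<times> (real^'k)) set" where
  "equilibria \<equiv> {(m, x). equilibrium m x}"

lemma compact_equilibria: "compact (equilibria \<inter> {a..b} \<times> UNIV)"
proof -
  let ?K = "{a..b} \<times> Simplex N n e"
  have eq: "equilibria \<inter> {a..b} \<times> UNIV = ?K \<inter> (\<lambda>z. mut_field (fst z) (snd z)) -` {0}"
    by (auto simp: equilibrium_def)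
  have K: "compact ?K" by (intro compact_Times compact_Icc Simplex_compact)
  have "continuous_on ?K (\<lambda>z. mut_field (fst z) (snd z))"
    unfolding mut_field_def using Simplex_subset_U
    by (intro continuous_intros continuous_on_compose2[OF continuous_on_phi_vec continuous_on_snd]) auto
  then have "closed (?K \<inter> (\<lambda>z. mut_field (fst z) (snd z)) -` {0})"
    using K by (intro continuous_closed_preimage compact_imp_closed closed_singleton)
  moreover have "bounded (?K \<inter> (\<lambda>z. mut_field (fst z) (snd z)) -` {0})"
    using K compact_imp_bounded bounded_subset by blast
  ultimately show ?thesis
    unfolding eq by (simp add: compact_eq_bounded_closed)
qed

lemma equilibria_continue:
  assumes "m \<in> rates" "(m, x) \<in> equilibria" "open W" "(m, x) \<in> W"
  shows "\<exists>\<delta>>0. \<forall>m'. \<bar>m' - m\<bar> < \<delta> \<longrightarrow> (\<exists>y. (m', y) \<in> equilibria \<inter> W)"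
proof -
  have "equilibrium m x" using assms(2) by simp
  with assms(1) obtain V \<delta> \<gamma> where "V \<subseteq> W" "0 < \<delta>" "\<And>m'. \<bar>m' - m\<bar> < \<delta> \<Longrightarrow> equilibrium m' (\<gamma> m') \<and> (m', \<gamma> m') \<in> V"
    by (rule equilibrium_local_branch[OF _ _ assms(3,4)]) blast
  then show ?thesis by blast
qed

lemma equilibria_isolated:
  assumes "m \<in> rates" "(m, x) \<in> equilibria"
  shows "\<exists>W. open W \<and> (m, x) \<in> W \<and> single_valued (equilibria \<inter> W)"
proof -
  have "equilibrium m x" using assms(2) by simp
  with assms(1) obtain V where "open V" "(m, x) \<in> V"
    "\<And>m x y. (m, x) \<in> V \<Longrightarrow> (m, y) \<in> V \<Longrightarrow> equilibrium m x \<Longrightarrow> equilibrium m y \<Longrightarrow> x = y"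
    by (rule equilibrium_local_branch[OF _ _ open_UNIV UNIV_I]) blast
  then show ?thesis by (intro exI[of _ V]) (auto intro: single_valuedI)
qed

theorem equilibria_unique_exist:
  assumes "M \<in> rates" "equilibrium M xM"
  shows "\<forall>m\<in>rates. \<exists>!x. equilibrium m x"
proof -
  have exist: "\<forall>m\<in>rates. \<exists>x. (m, x) \<in> equilibria"
  proof (rule fibres_nonempty_if_connected[OF connected_Collect_ereal_less compact_equilibria])
    show "\<exists>\<delta>>0. \<forall>m'. \<bar>m' - m\<bar> < \<delta> \<longrightarrow> (\<exists>y. (m', y) \<in> equilibria)"
      if "m \<in> rates" "(m, x) \<in> equilibria" for m x
      using equilibria_continue[OF that open_UNIV UNIV_I] by simp
    show "M \<in> rates" "(M, xM) \<in> equilibria" using assms by auto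
  qed
  obtain m1 where m1: "\<And>m x y. m \<ge> m1 \<Longrightarrow> equilibrium m x \<Longrightarrow> equilibrium m y \<Longrightarrow> x = y"
    using equilibria_unique_large by blast
  have start: "max M m1 \<in> rates" using assms(1) by (auto intro: less_le_trans)
  have start_single: "single_valued (equilibria \<inter> {max M m1} \<times> UNIV)"
    using m1[of "max M m1"] by (intro single_valuedI) auto
  have unique: "single_valued (equilibria \<inter> rates \<times> UNIV)"
    using single_valued_if_connected[OF connected_Collect_ereal_less compact_equilibria
          equilibria_continue equilibria_isolated start start_single] .
  show ?thesis
  proof
    fix m assume "m \<in> rates"
    then obtain x where "equilibrium m x" using exist by auto
    then show "\<exists>!x. equilibrium m x"
      using single_valuedD[OF unique] \<open>m \<in> rates\<close> by (intro ex1I[of _ x]) auto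
  qed
qed

lemma equilibrium_curve_differentiable:
  assumes unique: "\<forall>m\<in>rates. \<exists>!x. equilibrium m x"
    and g: "\<And>m. m \<in> rates \<Longrightarrow> equilibrium m (g m)" and m: "m \<in> rates"
  shows "\<exists>D. (g has_vector_derivative D) (at m)"
proof -
  obtain \<delta> \<gamma> where "0 < \<delta>" "\<And>m'. \<bar>m' - m\<bar> < \<delta> \<Longrightarrow> equilibrium m' (\<gamma> m')"
      "\<exists>D. (\<gamma> has_vector_derivative D) (at m)"
    using equilibrium_local_branch[OF m g[OF m] open_UNIV UNIV_I] by metis
  moreover have "\<gamma> m' = g m'" if "m' \<in> ball m \<delta> \<inter> rates" "\<bar>m' - m\<bar> < \<delta>" for m'
    using unique g that calculation(2) by (metis Int_iff)
  ultimately show ?thesis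
    using m open_Collect_ereal_less
    by (metis has_vector_derivative_transform_within_open[of \<gamma> _ m "ball m \<delta> \<inter> rates" g]
        Int_iff centre_in_ball dist_real_def mem_ball open_Int open_ball abs_minus_commute)
qed

text \<open>Differentiating \<open>\<Psi>(m, g m) = (m, 0)\<close>.\<close>

lemma Psi'_equilibrium_curve:
  assumes g: "\<And>m. m \<in> rates \<Longrightarrow> equilibrium m (g m)" and m: "m \<in> rates"
    and g': "(g has_vector_derivative g'm) (at m)"
  shows "Psi' (m, g m) (1, g'm) = (1, 0)"
proof -
  have gU: "g m \<in> U" using g[OF m] Simplex_subset_U by (auto simp: equilibrium_def)
  have "((\<lambda>m. (m, g m)) has_derivative (\<lambda>t. (t, t *\<^sub>R g'm))) (at m)"
    using g' by (intro has_derivative_Pair has_derivative_ident) (simp add: has_vector_derivative_def)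
  from diff_chain_at[OF this]
  have "((\<lambda>m. Psi (m, g m)) has_derivative (\<lambda>t. Psi_deriv (m, g m) (t, t *\<^sub>R g'm))) (at m)"
    using Psi_has_derivative[of "(m, g m)"] gU by (simp add: o_def)
  then have "((\<lambda>m. (m, 0::real^'k)) has_derivative (\<lambda>t. Psi_deriv (m, g m) (t, t *\<^sub>R g'm))) (at m)"
    using has_derivative_transform_within_open[of "\<lambda>m. Psi (m, g m)" _ m UNIV rates "\<lambda>m. (m, 0)"]
      open_Collect_ereal_less m Psi_equilibrium g by blast
  moreover have "((\<lambda>m. (m, 0::real^'k)) has_derivative (\<lambda>t. (t, 0))) (at m)"
    by (intro derivative_eq_intros) auto
  ultimately have "(\<lambda>t. Psi_deriv (m, g m) (t, t *\<^sub>R g'm)) = (\<lambda>t. (t, 0))"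
    by (rule has_derivative_unique)
  from fun_cong[OF this, of 1] show ?thesis
    using Psi'_apply[of "(m, g m)"] gU by simp
qed

lemma equilibrium_curve_C1:
  assumes unique: "\<forall>m\<in>rates. \<exists>!x. equilibrium m x"
    and g: "\<And>m. m \<in> rates \<Longrightarrow> equilibrium m (g m)"
  shows "g C1_differentiable_on rates"
proof -
  obtain g' where g': "\<And>m. m \<in> rates \<Longrightarrow> (g has_vector_derivative g' m) (at m)"
    using equilibrium_curve_differentiable[OF unique g] by metis
  have "continuous_on rates g"
    using g' by (metis continuous_at_imp_continuous_on has_vector_derivative_continuous)
  have gU: "g m \<in> U" if "m \<in> rates" for m
    using g[OF that] Simplex_subset_U by (auto simp: equilibrium_def)
  have "continuous_on rates (\<lambda>m. (1::real, g' m))"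
  proof (rule continuous_on_linear_solution[OF _ _ continuous_on_const])
    show "continuous_on rates (\<lambda>m. Psi' (m, g m))"
      using \<open>continuous_on rates g\<close> gU
      by (intro continuous_on_compose2[OF continuous_on_Psi'] continuous_intros) auto
    show "inj (blinfun_apply (Psi' (m, g m)))" if "m \<in> rates" for m
      using Psi_deriv_inj[of m "g m"] Psi'_apply[of "(m, g m)"] g[OF that] gU[OF that] that
      by (simp add: equilibrium_def)
    show "Psi' (m, g m) (1, g' m) = (1, 0)" if "m \<in> rates" for m
      using Psi'_equilibrium_curve[OF g that g'[OF that]] .
  qed
  then have "continuous_on rates g'"
    by (metis (no_types) continuous_on_snd snd_conv continuous_on_cong)
  then show ?thesis
    unfolding C1_differentiable_on_def using g' by blast
qed

lemma equilibria_tendsto_c: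
  assumes "eventually (\<lambda>m. equilibrium m (g m)) at_top"
  shows "(g \<longlongrightarrow> c) at_top"
proof -
  obtain K where K: "\<And>x. x \<in> Simplex N n e \<Longrightarrow> norm (phi_vec x) \<le> K"
    using phi_vec_bounded by blast
  have "eventually (\<lambda>m. norm (g m - c) \<le> K / m) at_top"
    using assms eventually_gt_at_top[of 0]
  proof eventually_elim
    case (elim m)
    then have "m * norm (g m - c) = norm (phi_vec (g m))"
      using equilibrium_phi_vec by simp
    also have "\<dots> \<le> K" using K elim(1) by (simp add: equilibrium_def)
    finally show ?case using elim(2) by (simp add: field_simps)
  qed
  moreover have "((\<lambda>m. K / m) \<longlongrightarrow> 0) at_top"
    by (intro tendsto_divide_0[OF tendsto_const] filterlim_at_top_imp_at_infinity filterlim_ident)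
  ultimately have "((\<lambda>m. g m - c) \<longlongrightarrow> 0) at_top"
    by (rule Lim_null_comparison)
  then show ?thesis by (rule LIM_zero_cancel)
qed

end

theorem mainTheorem5:
  fixes N :: nat and n :: "nat \<Rightarrow> nat" and e :: "'k::finite \<Rightarrow> nat \<times> nat"
    and f :: "nat \<Rightarrow> nat \<Rightarrow> real^'k \<Rightarrow> real" and U :: "(real^'k) set"
    and c xM :: "real^'k" and M :: real
  assumes bij: "bij_betw e UNIV (Sidx N n)"
    and U: "open U" "Simplex N n e \<subseteq> U"
    and C1: "\<forall>(i,h)\<in>Sidx N n. C1_on (f i h) U"
    and indep: "\<forall>(i,h)\<in>Sidx N n. \<forall>k\<in>{1..n i}. \<forall>x\<in>U. partial_zero e (f i h) i k x"
    and c: "c \<in> intSimplex N n e"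
    and M: "ereal M > Mlow N n e f"
    and xM: "mut_eq N n e f c M xM"
  shows "\<exists>\<M> :: real \<Rightarrow> real^'k.
           \<M> M = xM \<and>
           (\<forall>m. ereal m > Mlow N n e f \<longrightarrow> mut_eq N n e f c m (\<M> m)) \<and>
           continuous_on {m. ereal m > Mlow N n e f} \<M> \<and>
           (\<forall>\<G> :: real \<Rightarrow> real^'k.
              continuous_on {m. ereal m > Mlow N n e f} \<G> \<and> \<G> M = xM \<and>
              (\<forall>m. ereal m > Mlow N n e f \<longrightarrow> mut_eq N n e f c m (\<G> m)) \<longrightarrow>
              (\<forall>m. ereal m > Mlow N n e f \<longrightarrow> \<G> m = \<M> m)) \<and>
           \<M> C1_differentiable_on {m. ereal m > Mlow N n e f} \<and>
           (\<M> \<longlongrightarrow> c) at_top"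
proof -
  interpret mutation_system N n e f U c
    using bij U C1 c by unfold_locales auto
  have unique: "\<forall>m\<in>rates. \<exists>!x. equilibrium m x"
    using equilibria_unique_exist M xM by (simp add: mut_eq_iff_equilibrium)
  define \<M> where "\<M> m = (THE x. equilibrium m x)" for m
  have eq: "equilibrium m (\<M> m)" if "m \<in> rates" for m
    using unique that unfolding \<M>_def by (blast intro: theI')
  have the_eq: "x = \<M> m" if "m \<in> rates" "equilibrium m x" for m x
    using unique that unfolding \<M>_def by (blast intro: the1_equality[symmetric])
  have C1: "\<M> C1_differentiable_on rates"
    using unique eq by (rule equilibrium_curve_C1)
  have "equilibrium m (\<M> m)" if "M \<le> m" for m
    using eq less_le_trans[OF M, of "ereal m"] that by simp
  then have "(\<M> \<longlongrightarrow> c) at_top"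
    by (intro equilibria_tendsto_c eventually_at_top_linorderI)
  then show ?thesis
    using C1 C1_differentiable_imp_continuous_on[OF C1] eq the_eq M xM
    by (intro exI[of _ \<M>]) (auto simp: mut_eq_iff_equilibrium)
qed

end
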